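(* Consider a matched pair study and assume Fisher's null $H_0$ holds. (i) For any $1\le k\le I$ and $\alpha\in(0,1)$, $\{\Gamma_0\in[1,\infty]:\overline p_{\Gamma_0;k}>\alpha\}$ is a $1-\alpha$ confidence set for $\Gamma^\star_{(k)}$, and it equals either $(\hat\Gamma_{(k)},\infty]$ or $[\hat\Gamma_{(k)},\infty]$, where $\hat\Gamma_{(k)}=\inf\{\Gamma_0\ge1:\overline p_{\Gamma_0;k}>\alpha\}$. (ii) For any $\Gamma_0$ and $\alpha\in(0,1)$, $\{I-k:\overline p_{\Gamma_0;k}>\alpha,\ 0\le k\le I\}$ is a $1-\alpha$ confidence set for $I^\star(\Gamma_0)$, and it equals $\{\hat I(\Gamma_0),\hat I(\Gamma_0)+1,\dots,I\}$ with $\hat I(\Gamma_0)=I-\sup\{k:\overline p_{\Gamma_0;k}>\alpha,\ 0\le k\le I\}$.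
   Context: Setting: $I$ matched pairs, potential outcomes fixed, $Z$ (one treated unit per pair) is the only randomness with true mechanism $\mathbb P(Z=z)=\prod_i\prod_j(p^\star_{ij})^{z_{ij}}$, $p^\star_{i1}+p^\star_{i2}=1$; true hidden bias $\Gamma^\star_i=\max_jp^\star_{ij}/\min_kp^\star_{ik}\in[1,\infty]$; $\Gamma^\star_{(k)}$ is its $k$th smallest value, and $I^\star(\Gamma_0)=\#\{i:\Gamma^\star_i>\Gamma_0\}$. Fisher's null $H_0$: $Y_{ij}(1)=Y_{ij}(0)$ for all $i,j$. $T=\sum_i\sum_jZ_{ij}q_{ij}$ with $q_{ij}$ fixed functions of $Y(0)$. Fix an ordering of pairs by nondecreasing $|q_{i1}-q_{i2}|$; $\mathcal I_k$ is the first $k$ pairs. $\overline T(\Gamma_0;k)$ is a sum of independent variables: for $i\in\mathcal I_k$ it equals $\max\{q_{i1},q_{i2}\}$ with probability $\Gamma_0/(1+\Gamma_0)$ and $\min\{q_{i1},q_{i2}\}$ otherwise; for $i\notin\mathcal I_k$ it equals $\max\{q_{i1},q_{i2}\}$ with probability 1. $\overline p_{\Gamma_0;k}=\mathbb P(\overline T(\Gamma_0;k)\ge c)|_{c=T}$ for $1\le k\le I$, and by convention $\overline p_{\Gamma_0;0}=1$. *)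

theory Defs
  imports "HOL-Probability.Probability"
begin

text \<open>Pairs are indexed by 0..<I. For a treatment assignment z :: nat => bool,
  z i = True means unit 1 of pair i is treated (Z_i1 = 1, Z_i2 = 0), z i = False means
  unit 2 is treated. A pair-indexed quantity x_ij is encoded as x i True = x_i1 and
  x i False = x_i2. p i is p*_i1, so p*_i2 = 1 - p i.\<close>

definition Zdist :: "nat \<Rightarrow> (nat \<Rightarrow> real) \<Rightarrow> (nat \<Rightarrow> bool) pmf" where
  "Zdist I p = Pi_pmf {..<I} False (\<lambda>i. bernoulli_pmf (p i))"

definition Tstat :: "nat \<Rightarrow> (nat \<Rightarrow> bool \<Rightarrow> real) \<Rightarrow> (nat \<Rightarrow> bool) \<Rightarrow> real" where
  "Tstat I q z = (\<Sum>i<I. q i (z i))"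

definition gprob :: "ereal \<Rightarrow> real" where
  "gprob \<Gamma>0 = (if \<Gamma>0 = \<infinity> then 1 else real_of_ereal \<Gamma>0 / (1 + real_of_ereal \<Gamma>0))"

text \<open>I_k: the first k pairs in the fixed ordering sigma (sigma j is the (j+1)-th pair).\<close>
definition Ik :: "(nat \<Rightarrow> nat) \<Rightarrow> nat \<Rightarrow> nat set" where
  "Ik \<sigma> k = \<sigma> ` {..<k}"

definition Tbar_dist :: "nat \<Rightarrow> (nat \<Rightarrow> bool \<Rightarrow> real) \<Rightarrow> (nat \<Rightarrow> nat) \<Rightarrow> ereal \<Rightarrow> nat \<Rightarrow> real pmf" where
  "Tbar_dist I q \<sigma> \<Gamma>0 k =
     map_pmf (\<lambda>w. \<Sum>i<I. if w i then max (q i True) (q i False) else min (q i True) (q i False))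
       (Pi_pmf {..<I} False (\<lambda>i. bernoulli_pmf (if i \<in> Ik \<sigma> k then gprob \<Gamma>0 else 1)))"

definition pbar :: "nat \<Rightarrow> (nat \<Rightarrow> bool \<Rightarrow> real) \<Rightarrow> (nat \<Rightarrow> nat) \<Rightarrow> ereal \<Rightarrow> nat \<Rightarrow> real \<Rightarrow> real" where
  "pbar I q \<sigma> \<Gamma>0 k c =
     (if k = 0 then 1 else measure_pmf.prob (Tbar_dist I q \<sigma> \<Gamma>0 k) {t. c \<le> t})"

definition Gamma_star :: "(nat \<Rightarrow> real) \<Rightarrow> nat \<Rightarrow> ereal" where
  "Gamma_star p i =
     (let a = p i; b = 1 - p i in if min a b = 0 then \<infinity> else ereal (max a b / min a b))"

definition Gamma_order :: "nat \<Rightarrow> (nat \<Rightarrow> real) \<Rightarrow> nat \<Rightarrow> ereal" where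
  "Gamma_order I p k = sort (map (Gamma_star p) [0..<I]) ! (k - 1)"

definition Istar :: "nat \<Rightarrow> (nat \<Rightarrow> real) \<Rightarrow> ereal \<Rightarrow> nat" where
  "Istar I p \<Gamma>0 = card {i \<in> {..<I}. \<Gamma>0 < Gamma_star p i}"

definition CS_Gamma :: "nat \<Rightarrow> (nat \<Rightarrow> bool \<Rightarrow> real) \<Rightarrow> (nat \<Rightarrow> nat) \<Rightarrow> real \<Rightarrow> nat \<Rightarrow> (nat \<Rightarrow> bool) \<Rightarrow> ereal set" where
  "CS_Gamma I q \<sigma> \<alpha> k z = {\<Gamma>0. 1 \<le> \<Gamma>0 \<and> pbar I q \<sigma> \<Gamma>0 k (Tstat I q z) > \<alpha>}"

definition Gamma_hat :: "nat \<Rightarrow> (nat \<Rightarrow> bool \<Rightarrow> real) \<Rightarrow> (nat \<Rightarrow> nat) \<Rightarrow> real \<Rightarrow> nat \<Rightarrow> (nat \<Rightarrow> bool) \<Rightarrow> ereal" where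
  "Gamma_hat I q \<sigma> \<alpha> k z = Inf {\<Gamma>0. 1 \<le> \<Gamma>0 \<and> pbar I q \<sigma> \<Gamma>0 k (Tstat I q z) > \<alpha>}"

definition CS_I :: "nat \<Rightarrow> (nat \<Rightarrow> bool \<Rightarrow> real) \<Rightarrow> (nat \<Rightarrow> nat) \<Rightarrow> real \<Rightarrow> ereal \<Rightarrow> (nat \<Rightarrow> bool) \<Rightarrow> nat set" where
  "CS_I I q \<sigma> \<alpha> \<Gamma>0 z = {I - k | k. k \<le> I \<and> pbar I q \<sigma> \<Gamma>0 k (Tstat I q z) > \<alpha>}"

definition I_hat :: "nat \<Rightarrow> (nat \<Rightarrow> bool \<Rightarrow> real) \<Rightarrow> (nat \<Rightarrow> nat) \<Rightarrow> real \<Rightarrow> ereal \<Rightarrow> (nat \<Rightarrow> bool) \<Rightarrow> nat" where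
  "I_hat I q \<sigma> \<alpha> \<Gamma>0 z = I - Sup {k. k \<le> I \<and> pbar I q \<sigma> \<Gamma>0 k (Tstat I q z) > \<alpha>}"

end

theory Submission
  imports Defs "HOL-Combinatorics.Permutations"
begin

text \<open>
  Under Fisher's null the statistic T is a function of Z alone. Write each summand as the
  larger q-value of its pair minus the gap |q_i1 - q_i2| unless the larger value is selected.
  A pair with hidden bias at most \<Gamma> selects it with probability at most \<Gamma>/(1+\<Gamma>), so a
  pair-by-pair Bernoulli coupling shows that T is stochastically dominated by the statistic in
  which k such pairs select the larger value with probability exactly \<Gamma>/(1+\<Gamma>) and all other
  pairs always do; moving these k random pairs onto the k pairs with the smallest gaps only
  enlarges it. Hence P(T \<ge> c) \<le> pbar(\<Gamma>;k)(c) for every c, and pbar(\<Gamma>;k)(T) is a valid p-value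
  as soon as k pairs have bias at most \<Gamma>; the choices \<Gamma> = \<Gamma>*_(k) and k = I - I*(\<Gamma>0) give the
  coverage statements. The shapes of the confidence sets follow because pbar is nondecreasing
  in \<Gamma> and nonincreasing in k.
\<close>

lemma bool_pmf_eq_bernoulli: "M = bernoulli_pmf (pmf M True)"
proof (rule pmf_eqI)
  fix x :: bool
  have "(\<Sum>x\<in>UNIV. pmf M x) = 1"
    by (rule sum_pmf_eq_1) auto
  then have "pmf M True + pmf M False = 1"
    by (simp add: UNIV_bool)
  then show "pmf M x = pmf (bernoulli_pmf (pmf M True)) x"
    by (cases x) (auto simp: pmf_le_1)
qed

lemma map_pmf_eq_bernoulli:
  assumes "0 \<le> a" "a \<le> 1"
  shows "map_pmf (\<lambda>x. x = h) (bernoulli_pmf a) = bernoulli_pmf (if h then a else 1 - a)"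
proof -
  have "{x. \<not> x} = {False}"
    by auto
  then show ?thesis
    using assms by (subst bool_pmf_eq_bernoulli) (cases h; simp add: pmf_map vimage_def measure_pmf_single)
qed

text \<open>For a = 1 the inner parameter is the junk value 0 / 0 = 0, harmless since then x is almost surely true.\<close>

definition bernoulli_coupling :: "real \<Rightarrow> real \<Rightarrow> (bool \<times> bool) pmf" where
  "bernoulli_coupling a b =
     do {x \<leftarrow> bernoulli_pmf a; y \<leftarrow> bernoulli_pmf ((b - a) / (1 - a)); return_pmf (x, x \<or> y)}"

lemma map_fst_bernoulli_coupling: "map_pmf fst (bernoulli_coupling a b) = bernoulli_pmf a"
  by (simp add: bernoulli_coupling_def map_bind_pmf bind_return_pmf')

lemma map_snd_bernoulli_coupling:
  assumes "0 \<le> a" "a \<le> b" "b \<le> 1"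
  shows "map_pmf snd (bernoulli_coupling a b) = bernoulli_pmf b"
proof -
  have r: "0 \<le> (b - a) / (1 - a)" "(b - a) / (1 - a) \<le> 1"
    using assms by (auto simp: divide_le_eq_1)
  have "pmf (map_pmf snd (bernoulli_coupling a b)) True = a + (1 - a) * ((b - a) / (1 - a))"
    using assms r by (simp add: bernoulli_coupling_def map_bind_pmf pmf_bind)
  also have "\<dots> = b"
    using assms by (cases "a = 1") (auto simp: field_simps)
  finally show ?thesis
    by (subst bool_pmf_eq_bernoulli) simp
qed

lemma set_pmf_bernoulli_coupling: "(x, y) \<in> set_pmf (bernoulli_coupling a b) \<Longrightarrow> x \<longrightarrow> y"
  by (auto simp: bernoulli_coupling_def)

lemma Pi_pmf_coupling_prob_le:
  assumes "finite A"
    and fst: "\<And>i. i \<in> A \<Longrightarrow> map_pmf fst (K i) = f i"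
    and snd: "\<And>i. i \<in> A \<Longrightarrow> map_pmf snd (K i) = g i"
    and EF: "\<And>x y. (\<And>i. i \<in> A \<Longrightarrow> (x i, y i) \<in> set_pmf (K i)) \<Longrightarrow> x \<in> E \<Longrightarrow> y \<in> F"
  shows "measure_pmf.prob (Pi_pmf A dx f) E \<le> measure_pmf.prob (Pi_pmf A dy g) F"
proof -
  let ?P = "Pi_pmf A (dx, dy) K"
  have "Pi_pmf A dx f = map_pmf (\<lambda>h. fst \<circ> h) ?P"
    using Pi_pmf_map[OF \<open>finite A\<close>, of fst "(dx, dy)" dx K] fst by (simp cong: Pi_pmf_cong)
  moreover have "Pi_pmf A dy g = map_pmf (\<lambda>h. snd \<circ> h) ?P"
    using Pi_pmf_map[OF \<open>finite A\<close>, of snd "(dx, dy)" dy K] snd by (simp cong: Pi_pmf_cong)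
  moreover have "measure_pmf.prob ?P {h. fst \<circ> h \<in> E} \<le> measure_pmf.prob ?P {h. snd \<circ> h \<in> F}"
  proof (rule measure_pmf.finite_measure_mono_AE)
    show "AE h in measure_pmf ?P. h \<in> {h. fst \<circ> h \<in> E} \<longrightarrow> h \<in> {h. snd \<circ> h \<in> F}"
      unfolding AE_measure_pmf_iff set_Pi_pmf[OF \<open>finite A\<close>]
    proof (intro ballI impI)
      fix h assume "h \<in> PiE_dflt A (dx, dy) (set_pmf \<circ> K)" "h \<in> {h. fst \<circ> h \<in> E}"
      then show "h \<in> {h. snd \<circ> h \<in> F}"
        using EF[of "fst \<circ> h" "snd \<circ> h"] by (auto simp: PiE_dflt_def)
    qed
  qed simp
  ultimately show ?thesis
    by (simp add: vimage_def)
qed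

lemma prob_Pi_bernoulli_mono:
  assumes "finite A" "\<And>i. i \<in> A \<Longrightarrow> 0 \<le> a i \<and> a i \<le> b i \<and> b i \<le> 1"
    and up: "\<And>x y. (\<And>i. i \<in> A \<Longrightarrow> x i \<longrightarrow> y i) \<Longrightarrow> x \<in> E \<Longrightarrow> y \<in> E"
  shows "measure_pmf.prob (Pi_pmf A False (\<lambda>i. bernoulli_pmf (a i))) E
         \<le> measure_pmf.prob (Pi_pmf A False (\<lambda>i. bernoulli_pmf (b i))) E"
  using assms(1)
proof (rule Pi_pmf_coupling_prob_le[where K = "\<lambda>i. bernoulli_coupling (a i) (b i)"])
  fix x y assume "\<And>i. i \<in> A \<Longrightarrow> (x i, y i) \<in> set_pmf (bernoulli_coupling (a i) (b i))" "x \<in> E"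
  then show "y \<in> E"
    using up set_pmf_bernoulli_coupling by blast
qed (use assms(2) in \<open>auto simp: map_fst_bernoulli_coupling map_snd_bernoulli_coupling\<close>)

lemma Pi_pmf_permutes:
  assumes "finite A" "\<pi> permutes A"
  shows "Pi_pmf A dflt (\<lambda>x. f (\<pi> x)) = map_pmf (\<lambda>g. g \<circ> \<pi>) (Pi_pmf A dflt f)"
proof (rule pmf_eqI)
  fix g :: "'a \<Rightarrow> 'b"
  have inj: "inj (\<lambda>g. g \<circ> \<pi>)"
    using permutes_surj[OF assms(2)] by (auto intro!: injI simp: fun_eq_iff surj_def) metis
  have outside: "(\<forall>x. x \<notin> A \<longrightarrow> g (inv \<pi> x) = dflt) \<longleftrightarrow> (\<forall>x. x \<notin> A \<longrightarrow> g x = dflt)"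
    using permutes_not_in[OF permutes_inv[OF assms(2)]] by simp
  have "pmf (map_pmf (\<lambda>g. g \<circ> \<pi>) (Pi_pmf A dflt f)) ((g \<circ> inv \<pi>) \<circ> \<pi>)
        = pmf (Pi_pmf A dflt f) (g \<circ> inv \<pi>)"
    by (rule pmf_map_inj'[OF inj])
  also have "\<dots> = (if \<forall>x. x \<notin> A \<longrightarrow> g x = dflt then \<Prod>x\<in>A. pmf (f x) (g (inv \<pi> x)) else 0)"
    using assms(1) outside by (auto simp: pmf_Pi)
  also have "(\<Prod>x\<in>A. pmf (f x) (g (inv \<pi> x))) = (\<Prod>x\<in>A. pmf (f (\<pi> x)) (g x))"
    using prod.reindex_bij_betw[OF permutes_imp_bij[OF assms(2)], of "\<lambda>x. pmf (f x) (g (inv \<pi> x))"]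
      permutes_inverses(2)[OF assms(2)] by simp
  also have "(if \<forall>x. x \<notin> A \<longrightarrow> g x = dflt then \<Prod>x\<in>A. pmf (f (\<pi> x)) (g x) else 0)
             = pmf (Pi_pmf A dflt (\<lambda>x. f (\<pi> x))) g"
    using assms(1) by (simp add: pmf_Pi)
  finally show "pmf (Pi_pmf A dflt (\<lambda>x. f (\<pi> x))) g = pmf (map_pmf (\<lambda>g. g \<circ> \<pi>) (Pi_pmf A dflt f)) g"
    using permutes_inverses(2)[OF assms(2)] by (simp add: o_def)
qed

lemma permutes_extend_bij_betw:
  assumes "finite A" "C \<subseteq> A" "D \<subseteq> A" "bij_betw f C D"
  obtains \<pi> where "\<pi> permutes A" "\<And>x. x \<in> C \<Longrightarrow> \<pi> x = f x"
proof -
  have "finite C" "finite D"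
    using assms(1-3) by (auto intro: finite_subset)
  then have "card (A - C) = card (A - D)"
    using assms(2,3) bij_betw_same_card[OF assms(4)] by (simp add: card_Diff_subset)
  then obtain g where g: "bij_betw g (A - C) (A - D)"
    using finite_same_card_bij[of "A - C" "A - D"] assms(1) by auto
  define \<pi> where "\<pi> x = (if x \<in> C then f x else if x \<in> A then g x else x)" for x
  have "bij_betw \<pi> C D"
    using assms(4) by (rule bij_betw_cong[THEN iffD1, rotated]) (simp add: \<pi>_def)
  moreover have "bij_betw \<pi> (A - C) (A - D)"
    using g by (rule bij_betw_cong[THEN iffD1, rotated]) (simp add: \<pi>_def)
  ultimately have "bij_betw \<pi> (C \<union> (A - C)) (D \<union> (A - D))"
    by (rule bij_betw_combine) blast
  then have "bij_betw \<pi> A A"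
    using assms(2,3) by (metis Diff_partition)
  then have "\<pi> permutes A"
    by (rule bij_imp_permutes) (use assms(2) in \<open>auto simp: \<pi>_def\<close>)
  then show thesis
    by (rule that) (simp add: \<pi>_def)
qed

lemma bij_betw_prefix_dominated:
  fixes d :: "'b \<Rightarrow> 'a::linorder"
  assumes \<sigma>: "bij_betw \<sigma> {..<n} A"
    and mono: "\<And>a b. a \<le> b \<Longrightarrow> b < n \<Longrightarrow> d (\<sigma> a) \<le> d (\<sigma> b)"
    and B: "B \<subseteq> A" "card B = k"
  obtains f where "bij_betw f (\<sigma> ` {..<k}) B" "\<And>j. j \<in> \<sigma> ` {..<k} \<Longrightarrow> d j \<le> d (f j)"
proof -
  define S where "S = {a \<in> {..<n}. \<sigma> a \<in> B}"
  define s where "s = sorted_list_of_set S"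
  have inj: "inj_on \<sigma> {..<n}"
    using \<sigma> by (simp add: bij_betw_def)
  have "\<sigma> ` S = B"
    using \<sigma> B(1) by (auto simp: S_def bij_betw_def)
  moreover have "inj_on \<sigma> S"
    by (rule inj_on_subset[OF inj]) (auto simp: S_def)
  ultimately have \<sigma>S: "bij_betw \<sigma> S B"
    by (simp add: bij_betw_def)
  have S_sub: "S \<subseteq> {..<n}"
    by (auto simp: S_def)
  have card_S: "card S = k"
    using bij_betw_same_card[OF \<sigma>S] B(2) by simp
  have len: "length s = k" and set_s: "set s = S"
    using card_S finite_subset[OF S_sub] by (simp_all add: s_def)
  have "k \<le> n"
    using card_mono[OF finite_lessThan S_sub] card_S by simp
  then have \<sigma>k: "bij_betw \<sigma> {..<k} (\<sigma> ` {..<k})"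
    by (simp add: bij_betw_def inj_on_subset[OF inj])
  have "bij_betw ((!) s) {..<k} S"
    using len set_s by (intro bij_betw_nth) (auto simp: s_def)
  then have "bij_betw (\<lambda>a. \<sigma> (s ! a)) {..<k} B"
    using \<sigma>S by (rule bij_betw_trans[unfolded comp_def])
  then have f: "bij_betw (\<lambda>j. \<sigma> (s ! inv_into {..<k} \<sigma> j)) (\<sigma> ` {..<k}) B"
    using bij_betw_inv_into[OF \<sigma>k] by (rule bij_betw_trans[unfolded comp_def, rotated])
  have "d j \<le> d (\<sigma> (s ! inv_into {..<k} \<sigma> j))" if j: "j \<in> \<sigma> ` {..<k}" for j
  proof -
    obtain a where a: "a < k" "j = \<sigma> a"
      using j by blast
    have "inv_into {..<k} \<sigma> j = a"
      using a \<sigma>k by (simp add: bij_betw_def inv_into_f_f)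
    moreover have "a \<le> s ! a"
      using sorted_wrt_less_idx[of "s" a] a len by (simp add: s_def strict_sorted_list_of_set)
    moreover have "s ! a < n"
      using a len set_s nth_mem[of a s] S_sub by auto
    ultimately show ?thesis
      using mono a by simp
  qed
  with f show thesis
    by (rule that)
qed

lemma Gamma_star_ge_1:
  assumes "0 \<le> p i" "p i \<le> 1"
  shows "1 \<le> Gamma_star p i"
proof (cases "min (p i) (1 - p i) = 0")
  case False
  then have "1 \<le> max (p i) (1 - p i) / min (p i) (1 - p i)"
    using assms by (auto simp: le_divide_eq_1 min_def max_def)
  with False show ?thesis
    by (simp add: Gamma_star_def Let_def)
qed (simp add: Gamma_star_def Let_def)

lemma gprob_bounds: "1 \<le> \<Gamma> \<Longrightarrow> 0 \<le> gprob \<Gamma> \<and> gprob \<Gamma> \<le> 1"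
  by (cases \<Gamma>) (auto simp: gprob_def)

lemma gprob_mono:
  assumes "1 \<le> \<Gamma>" "\<Gamma> \<le> \<Gamma>'"
  shows "gprob \<Gamma> \<le> gprob \<Gamma>'"
proof (cases \<Gamma>')
  case (real r')
  then obtain r where "\<Gamma> = ereal r" "1 \<le> r" "r \<le> r'"
    using assms by (cases \<Gamma>) auto
  then show ?thesis
    using real by (simp add: gprob_def field_simps)
qed (use assms gprob_bounds[of \<Gamma>] in \<open>auto simp: gprob_def\<close>)

lemma max_le_gprob_if_Gamma_star_le:
  assumes "0 \<le> p i" "p i \<le> 1" "1 \<le> \<gamma>" "Gamma_star p i \<le> \<gamma>"
  shows "max (p i) (1 - p i) \<le> gprob \<gamma>"
proof (cases \<gamma>)
  case (real g)
  define M where "M = max (p i) (1 - p i)"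
  have "min (p i) (1 - p i) \<noteq> 0"
    using assms real by (auto simp: Gamma_star_def Let_def)
  then have m: "0 < 1 - M" "ereal (M / (1 - M)) \<le> ereal g"
    using assms real by (auto simp: Gamma_star_def Let_def M_def min_def max_def)
  then have "M \<le> g * (1 - M)"
    by (simp add: field_simps)
  then have "M \<le> g / (1 + g)"
    using assms(3) real by (simp add: field_simps)
  then show ?thesis
    using real by (simp add: gprob_def M_def)
qed (use assms in \<open>auto simp: gprob_def\<close>)

definition Tbar_value :: "nat \<Rightarrow> (nat \<Rightarrow> bool \<Rightarrow> real) \<Rightarrow> (nat \<Rightarrow> bool) \<Rightarrow> real" where
  "Tbar_value I q w = (\<Sum>i<I. if w i then max (q i True) (q i False) else min (q i True) (q i False))"

lemma pbar_eq_prob: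
  assumes "k \<noteq> 0"
  shows "pbar I q \<sigma> \<Gamma> k c =
    measure_pmf.prob (Pi_pmf {..<I} False (\<lambda>i. bernoulli_pmf (if i \<in> Ik \<sigma> k then gprob \<Gamma> else 1)))
      {w. c \<le> Tbar_value I q w}"
  using assms by (simp add: pbar_def Tbar_dist_def Tbar_value_def vimage_def)

lemma Tbar_value_mono: "(\<And>i. i < I \<Longrightarrow> x i \<longrightarrow> y i) \<Longrightarrow> Tbar_value I q x \<le> Tbar_value I q y"
  unfolding Tbar_value_def by (intro sum_mono) auto

lemma Tstat_eq_Tbar_value: "Tstat I q z = Tbar_value I q (\<lambda>i. z i = (q i False \<le> q i True))"
  unfolding Tstat_def Tbar_value_def
proof (intro sum.cong refl)
  fix i
  show "q i (z i) = (if z i = (q i False \<le> q i True) then max (q i True) (q i False) else min (q i True) (q i False))"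
    by (cases "z i") auto
qed

lemma Tbar_value_eq_diff:
  "Tbar_value I q w =
    (\<Sum>i<I. max (q i True) (q i False)) - (\<Sum>i<I. if w i then 0 else \<bar>q i True - q i False\<bar>)"
  unfolding Tbar_value_def sum_subtractf[symmetric] by (intro sum.cong refl) auto

lemma Tbar_value_le_permute:
  assumes \<pi>: "\<pi> permutes {..<I}"
    and gap: "\<And>j. j < I \<Longrightarrow> \<not> w (\<pi> j) \<Longrightarrow> \<bar>q j True - q j False\<bar> \<le> \<bar>q (\<pi> j) True - q (\<pi> j) False\<bar>"
  shows "Tbar_value I q w \<le> Tbar_value I q (w \<circ> \<pi>)"
proof -
  let ?g = "\<lambda>i. \<bar>q i True - q i False\<bar>"
  have "(\<Sum>j<I. if w (\<pi> j) then 0 else ?g j) \<le> (\<Sum>j<I. if w (\<pi> j) then 0 else ?g (\<pi> j))"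
    using gap by (intro sum_mono) auto
  also have "\<dots> = (\<Sum>i<I. if w i then 0 else ?g i)"
    using sum.permute[OF \<pi>, of "\<lambda>i. if w i then 0 else ?g i"] by (simp add: o_def)
  finally show ?thesis
    by (simp add: Tbar_value_eq_diff)
qed

lemma pbar_mono_Gamma:
  assumes "1 \<le> \<Gamma>" "\<Gamma> \<le> \<Gamma>'"
  shows "pbar I q \<sigma> \<Gamma> k c \<le> pbar I q \<sigma> \<Gamma>' k c"
proof (cases "k = 0")
  case False
  have "0 \<le> gprob \<Gamma>" "gprob \<Gamma> \<le> gprob \<Gamma>'" "gprob \<Gamma>' \<le> 1"
    using gprob_bounds gprob_mono assms order_trans[OF assms] by auto
  then show ?thesis
    using False unfolding pbar_eq_prob[OF False]
    by (intro prob_Pi_bernoulli_mono) (auto intro: order_trans[OF _ Tbar_value_mono])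
qed (simp add: pbar_def)

lemma pbar_antimono_k:
  assumes "1 \<le> \<Gamma>" "k \<le> k'"
  shows "pbar I q \<sigma> \<Gamma> k' c \<le> pbar I q \<sigma> \<Gamma> k c"
proof (cases "k = 0")
  case False
  with assms have "k' \<noteq> 0" "Ik \<sigma> k \<subseteq> Ik \<sigma> k'"
    by (auto simp: Ik_def)
  then show ?thesis
    using False gprob_bounds[OF assms(1)] unfolding pbar_eq_prob[OF False] pbar_eq_prob[OF \<open>k' \<noteq> 0\<close>]
    by (intro prob_Pi_bernoulli_mono) (auto intro: order_trans[OF _ Tbar_value_mono])
qed (simp add: pbar_def)

lemma set_pmf_bernoulli_1: "y \<in> set_pmf (bernoulli_pmf 1) \<Longrightarrow> y"
  by (cases y) (auto simp: set_pmf_eq)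

lemma prob_Tstat_ge_le_permuted:
  assumes p: "\<forall>i<I. 0 \<le> p i \<and> p i \<le> 1" and \<pi>: "\<pi> permutes {..<I}"
    and b: "\<And>i. i < I \<Longrightarrow> max (p i) (1 - p i) \<le> b i \<and> b i \<le> 1"
    and gap: "\<And>j. j < I \<Longrightarrow> b (\<pi> j) \<noteq> 1 \<Longrightarrow>
                \<bar>q j True - q j False\<bar> \<le> \<bar>q (\<pi> j) True - q (\<pi> j) False\<bar>"
  shows "measure_pmf.prob (Zdist I p) {z. c \<le> Tstat I q z}
         \<le> measure_pmf.prob (Pi_pmf {..<I} False (\<lambda>j. bernoulli_pmf (b (\<pi> j)))) {w. c \<le> Tbar_value I q w}"
proof -
  define h where "h i = (q i False \<le> q i True)" for i
  define a where "a i = (if h i then p i else 1 - p i)" for i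
  \<comment> \<open>x records whether pair i selects its larger q-value; the coupling makes y i true whenever x is.\<close>
  define K where "K i = map_pmf (apfst (\<lambda>x. x = h i)) (bernoulli_coupling (a i) (b i))" for i
  have ab: "0 \<le> a i \<and> a i \<le> b i \<and> b i \<le> 1" if "i < I" for i
    using p b[OF that] that by (auto simp: a_def)
  have K_snd: "map_pmf snd (K i) = bernoulli_pmf (b i)" if "i < I" for i
    using ab[OF that] by (simp add: K_def pmf.map_comp o_def map_snd_bernoulli_coupling)
  have "measure_pmf.prob (Zdist I p) {z. c \<le> Tstat I q z}
        \<le> measure_pmf.prob (Pi_pmf {..<I} False (\<lambda>i. bernoulli_pmf (b i))) {y. c \<le> Tbar_value I q (y \<circ> \<pi>)}"
    unfolding Zdist_def
  proof (rule Pi_pmf_coupling_prob_le[where K = K])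
    fix i :: nat assume "i \<in> {..<I}"
    have "map_pmf fst (K i) = map_pmf (\<lambda>x. x = h i) (map_pmf fst (bernoulli_coupling (a i) (b i)))"
      by (simp add: K_def pmf.map_comp o_def)
    also have "\<dots> = bernoulli_pmf (p i)"
      using ab[of i] \<open>i \<in> {..<I}\<close>
      by (simp add: map_fst_bernoulli_coupling map_pmf_eq_bernoulli) (simp add: a_def)
    finally show "map_pmf fst (K i) = bernoulli_pmf (p i)" .
    show "map_pmf snd (K i) = bernoulli_pmf (b i)"
      using K_snd \<open>i \<in> {..<I}\<close> by simp
  next
    fix z y assume K: "\<And>i. i \<in> {..<I} \<Longrightarrow> (z i, y i) \<in> set_pmf (K i)" and "z \<in> {z. c \<le> Tstat I q z}"
    have "z i = h i \<longrightarrow> y i" if "i < I" for i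
      using K[of i] that set_pmf_bernoulli_coupling by (fastforce simp: K_def)
    moreover have "y (\<pi> j)" if "j < I" "b (\<pi> j) = 1" for j
    proof -
      have "\<pi> j < I"
        using permutes_in_image[OF \<pi>] that(1) by simp
      then have "y (\<pi> j) \<in> set_pmf (map_pmf snd (K (\<pi> j)))"
        using K[of "\<pi> j"] by force
      then show ?thesis
        using K_snd[OF \<open>\<pi> j < I\<close>] that(2) set_pmf_bernoulli_1 by simp
    qed
    ultimately have "Tstat I q z \<le> Tbar_value I q y" "Tbar_value I q y \<le> Tbar_value I q (y \<circ> \<pi>)"
      unfolding Tstat_eq_Tbar_value using gap
      by (auto simp: h_def intro!: Tbar_value_mono Tbar_value_le_permute[OF \<pi>])
    with \<open>z \<in> _\<close> show "y \<in> {y. c \<le> Tbar_value I q (y \<circ> \<pi>)}"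
      by simp
  qed simp
  also have "\<dots> = measure_pmf.prob (Pi_pmf {..<I} False (\<lambda>j. bernoulli_pmf (b (\<pi> j)))) {w. c \<le> Tbar_value I q w}"
    unfolding Pi_pmf_permutes[OF finite_lessThan \<pi>, of False "\<lambda>i. bernoulli_pmf (b i)"]
    by (simp add: vimage_def)
  finally show ?thesis .
qed

lemma prob_Tstat_ge_le_pbar:
  assumes p: "\<forall>i<I. 0 \<le> p i \<and> p i \<le> 1"
    and \<sigma>_bij: "bij_betw \<sigma> {..<I} {..<I}"
    and \<sigma>_order: "\<forall>a b. a \<le> b \<and> b < I \<longrightarrow>
                    \<bar>q (\<sigma> a) True - q (\<sigma> a) False\<bar> \<le> \<bar>q (\<sigma> b) True - q (\<sigma> b) False\<bar>"
    and \<gamma>: "1 \<le> \<gamma>" and B: "B \<subseteq> {..<I}" "card B = k" "\<forall>i\<in>B. Gamma_star p i \<le> \<gamma>"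
  shows "measure_pmf.prob (Zdist I p) {z. c \<le> Tstat I q z} \<le> pbar I q \<sigma> \<gamma> k c"
proof (cases "k = 0")
  case False
  obtain f where f: "bij_betw f (\<sigma> ` {..<k}) B"
    and f_gap: "\<And>j. j \<in> \<sigma> ` {..<k} \<Longrightarrow> \<bar>q j True - q j False\<bar> \<le> \<bar>q (f j) True - q (f j) False\<bar>"
    using bij_betw_prefix_dominated[OF \<sigma>_bij, of "\<lambda>i. \<bar>q i True - q i False\<bar>" B k] \<sigma>_order B by auto
  have "k \<le> I"
    using card_mono[OF finite_lessThan B(1)] B(2) by simp
  then have "\<sigma> ` {..<k} \<subseteq> {..<I}"
    using \<sigma>_bij by (auto simp: bij_betw_def)
  then obtain \<pi> where \<pi>: "\<pi> permutes {..<I}" "\<And>x. x \<in> \<sigma> ` {..<k} \<Longrightarrow> \<pi> x = f x"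
    using permutes_extend_bij_betw[OF finite_lessThan _ B(1) f] by blast
  have \<pi>_B: "\<pi> j \<in> B \<longleftrightarrow> j \<in> Ik \<sigma> k" for j
  proof -
    have "B = \<pi> ` (\<sigma> ` {..<k})"
      using f \<pi>(2) by (auto simp: bij_betw_def)
    then show ?thesis
      using permutes_inj[OF \<pi>(1)] by (auto simp: Ik_def inj_eq)
  qed
  define b where "b i = (if i \<in> B then gprob \<gamma> else 1)" for i
  have "measure_pmf.prob (Zdist I p) {z. c \<le> Tstat I q z}
        \<le> measure_pmf.prob (Pi_pmf {..<I} False (\<lambda>j. bernoulli_pmf (b (\<pi> j)))) {w. c \<le> Tbar_value I q w}"
  proof (rule prob_Tstat_ge_le_permuted[OF p \<pi>(1)])
    show "max (p i) (1 - p i) \<le> b i \<and> b i \<le> 1" if "i < I" for i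
      using p that B(3) max_le_gprob_if_Gamma_star_le[OF _ _ \<gamma>, of p i] gprob_bounds[OF \<gamma>]
      by (auto simp: b_def)
    show "\<bar>q j True - q j False\<bar> \<le> \<bar>q (\<pi> j) True - q (\<pi> j) False\<bar>" if "b (\<pi> j) \<noteq> 1" for j
      using that \<pi>_B f_gap \<pi>(2) by (auto simp: b_def Ik_def split: if_splits)
  qed
  also have "Pi_pmf {..<I} False (\<lambda>j. bernoulli_pmf (b (\<pi> j)))
             = Pi_pmf {..<I} False (\<lambda>j. bernoulli_pmf (if j \<in> Ik \<sigma> k then gprob \<gamma> else 1))"
    by (intro Pi_pmf_cong) (auto simp: b_def \<pi>_B)
  finally show ?thesis
    by (simp add: pbar_eq_prob[OF False])
qed (simp add: pbar_def)

lemma prob_pvalue_le: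
  fixes M :: "'a pmf" and T :: "'a \<Rightarrow> real"
  assumes "finite (set_pmf M)" and tail: "\<And>c. measure_pmf.prob M {x. c \<le> T x} \<le> G c"
    and "0 \<le> \<alpha>"
  shows "measure_pmf.prob M {x. G (T x) \<le> \<alpha>} \<le> \<alpha>"
proof -
  define D where "D = T ` (set_pmf M \<inter> {x. G (T x) \<le> \<alpha>})"
  show ?thesis
  proof (cases "D = {}")
    case True
    then have "set_pmf M \<inter> {x. G (T x) \<le> \<alpha>} = {}"
      by (auto simp: D_def)
    then have "measure_pmf.prob M {x. G (T x) \<le> \<alpha>} = 0"
      by (simp add: measure_pmf_zero_iff)
    then show ?thesis
      using \<open>0 \<le> \<alpha>\<close> by simp
  next
    case False
    have "finite D"
      using assms(1) by (simp add: D_def)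
    define t where "t = Min D"
    have "t \<in> D"
      using False \<open>finite D\<close> by (simp add: t_def)
    then have "G t \<le> \<alpha>"
      by (auto simp: D_def)
    have "measure_pmf.prob M {x. G (T x) \<le> \<alpha>} \<le> measure_pmf.prob M {x. t \<le> T x}"
      using \<open>finite D\<close>
      by (intro measure_pmf.finite_measure_mono_AE) (auto simp: AE_measure_pmf_iff t_def D_def)
    also have "\<dots> \<le> G t"
      by (rule tail)
    finally show ?thesis
      using \<open>G t \<le> \<alpha>\<close> by simp
  qed
qed

lemma finite_set_pmf_Zdist: "finite (set_pmf (Zdist I p))"
proof (rule finite_subset)
  show "set_pmf (Zdist I p) \<subseteq> PiE_dflt {..<I} False (\<lambda>_. UNIV)"
    unfolding Zdist_def by (rule order_trans[OF set_Pi_pmf_subset']) (auto simp: PiE_dflt_def)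
qed auto

lemma pbar_coverage:
  assumes "\<forall>i<I. 0 \<le> p i \<and> p i \<le> 1"
    and "bij_betw \<sigma> {..<I} {..<I}"
    and "\<forall>a b. a \<le> b \<and> b < I \<longrightarrow>
           \<bar>q (\<sigma> a) True - q (\<sigma> a) False\<bar> \<le> \<bar>q (\<sigma> b) True - q (\<sigma> b) False\<bar>"
    and "1 \<le> \<gamma>" "B \<subseteq> {..<I}" "card B = k" "\<forall>i\<in>B. Gamma_star p i \<le> \<gamma>"
    and "0 \<le> \<alpha>"
  shows "1 - \<alpha> \<le> measure_pmf.prob (Zdist I p) {z. \<alpha> < pbar I q \<sigma> \<gamma> k (Tstat I q z)}"
proof -
  let ?E = "{z. pbar I q \<sigma> \<gamma> k (Tstat I q z) \<le> \<alpha>}"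
  have "measure_pmf.prob (Zdist I p) ?E \<le> \<alpha>"
    using prob_pvalue_le[OF finite_set_pmf_Zdist prob_Tstat_ge_le_pbar[OF assms(1-7)] assms(8)] .
  moreover have "{z. \<alpha> < pbar I q \<sigma> \<gamma> k (Tstat I q z)} = UNIV - ?E"
    by auto
  ultimately show ?thesis
    using measure_pmf.prob_compl[of ?E "Zdist I p"] by simp
qed

lemma sorted_nth_in_image: "k < n \<Longrightarrow> sort (map f [0..<n]) ! k \<in> f ` {..<n}"
  using nth_mem[of k "sort (map f [0..<n])"] by auto

lemma card_le_sorted_nth:
  fixes f :: "nat \<Rightarrow> 'a::linorder"
  assumes "k < n"
  shows "Suc k \<le> card {i \<in> {..<n}. f i \<le> sort (map f [0..<n]) ! k}"
proof -
  define s where "s = sort (map f [0..<n])"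
  have len: "length s = n"
    by (simp add: s_def)
  have "card {i \<in> {..<n}. f i \<le> s ! k} = length (filter (\<lambda>x. x \<le> s ! k) (map f [0..<n]))"
    unfolding length_filter_conv_card by (intro arg_cong[where f = card]) auto
  also have "\<dots> = length (filter (\<lambda>x. x \<le> s ! k) s)"
    by (metis mset_filter mset_sort size_mset s_def)
  also have "\<dots> = card {i. i < n \<and> s ! i \<le> s ! k}"
    by (simp add: length_filter_conv_card len)
  finally have card_eq: "card {i \<in> {..<n}. f i \<le> s ! k} = card {i. i < n \<and> s ! i \<le> s ! k}" .
  have "{..k} \<subseteq> {i. i < n \<and> s ! i \<le> s ! k}"
    using assms len by (auto simp: s_def intro: sorted_nth_mono)
  then have "card {..k} \<le> card {i. i < n \<and> s ! i \<le> s ! k}"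
    by (intro card_mono) auto
  then show ?thesis
    using card_eq by (simp add: s_def)
qed

lemma upward_closed_eq_Inf:
  fixes S :: "'a::complete_linorder set"
  assumes up: "\<And>x y. x \<in> S \<Longrightarrow> x \<le> y \<Longrightarrow> y \<in> S"
  shows "S = {x. Inf S < x} \<or> S = {x. Inf S \<le> x}"
proof (cases "Inf S \<in> S")
  case True
  then have "S = {x. Inf S \<le> x}"
    using up by (auto intro: Inf_lower)
  then show ?thesis ..
next
  case False
  have "S = {x. Inf S < x}"
  proof safe
    fix x assume "x \<in> S"
    then show "Inf S < x"
      using False Inf_lower[of x S] by (metis order_le_less)
  next
    fix x assume "Inf S < x"
    then obtain y where "y \<in> S" "y < x"
      by (auto simp: Inf_less_iff)
    then show "x \<in> S"
      using up by auto
  qed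
  then show ?thesis ..
qed

lemma image_diff_downward_closed:
  fixes P :: "nat \<Rightarrow> bool"
  assumes "P 0" and down: "\<And>k k'. k \<le> k' \<Longrightarrow> P k' \<Longrightarrow> P k"
  shows "{n - k | k. k \<le> n \<and> P k} = {n - Sup {k. k \<le> n \<and> P k}..n}"
proof -
  let ?K = "{k. k \<le> n \<and> P k}"
  have "finite ?K" "?K \<noteq> {}"
    using assms(1) by auto
  then have "Sup ?K \<in> ?K"
    using Max_in cSup_eq_Max by metis
  then have top: "Sup ?K \<le> n" "P (Sup ?K)"
    by auto
  have "x \<in> {n - k | k. k \<le> n \<and> P k}" if "n - Sup ?K \<le> x" "x \<le> n" for x
    using that top down[of "n - x" "Sup ?K"] by (intro CollectI exI[of _ "n - x"]) auto
  moreover have "n - Sup ?K \<le> n - k" if "k \<le> n" "P k" for k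
    using that \<open>finite ?K\<close> by (simp add: diff_le_mono2 le_cSup_finite)
  ultimately show ?thesis
    by fastforce
qed

lemma CS_Gamma_coverage:
  assumes p: "\<forall>i<I. 0 \<le> p i \<and> p i \<le> 1"
    and \<sigma>_bij: "bij_betw \<sigma> {..<I} {..<I}"
    and \<sigma>_order: "\<forall>a b. a \<le> b \<and> b < I \<longrightarrow>
                    \<bar>q (\<sigma> a) True - q (\<sigma> a) False\<bar> \<le> \<bar>q (\<sigma> b) True - q (\<sigma> b) False\<bar>"
    and k: "1 \<le> k" "k \<le> I" and "0 \<le> \<alpha>"
  shows "1 - \<alpha> \<le> measure_pmf.prob (Zdist I p) {z. Gamma_order I p k \<in> CS_Gamma I q \<sigma> \<alpha> k z}"
proof -
  define \<gamma> where "\<gamma> = Gamma_order I p k"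
  have "\<gamma> \<in> Gamma_star p ` {..<I}"
    using sorted_nth_in_image[of "k - 1" I "Gamma_star p"] k by (simp add: \<gamma>_def Gamma_order_def)
  then have "1 \<le> \<gamma>"
    using Gamma_star_ge_1 p by auto
  have "k \<le> card {i \<in> {..<I}. Gamma_star p i \<le> \<gamma>}"
    using card_le_sorted_nth[of "k - 1" I "Gamma_star p"] k by (simp add: \<gamma>_def Gamma_order_def)
  then obtain B where "B \<subseteq> {i \<in> {..<I}. Gamma_star p i \<le> \<gamma>}" "card B = k"
    by (meson obtain_subset_with_card_n)
  then have "1 - \<alpha> \<le> measure_pmf.prob (Zdist I p) {z. \<alpha> < pbar I q \<sigma> \<gamma> k (Tstat I q z)}"
    using pbar_coverage[OF p \<sigma>_bij \<sigma>_order \<open>1 \<le> \<gamma>\<close>, of B k \<alpha>] \<open>0 \<le> \<alpha>\<close> by auto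
  then show ?thesis
    using \<open>1 \<le> \<gamma>\<close> by (simp add: CS_Gamma_def \<gamma>_def)
qed

lemma CS_Gamma_cases:
  "CS_Gamma I q \<sigma> \<alpha> k z = {\<Gamma>0. 1 \<le> \<Gamma>0 \<and> Gamma_hat I q \<sigma> \<alpha> k z < \<Gamma>0}
   \<or> CS_Gamma I q \<sigma> \<alpha> k z = {\<Gamma>0. 1 \<le> \<Gamma>0 \<and> Gamma_hat I q \<sigma> \<alpha> k z \<le> \<Gamma>0}"
proof -
  let ?S = "CS_Gamma I q \<sigma> \<alpha> k z"
  have "?S = {x. Inf ?S < x} \<or> ?S = {x. Inf ?S \<le> x}"
  proof (rule upward_closed_eq_Inf)
    fix x y assume "x \<in> ?S" "x \<le> y"
    then show "y \<in> ?S"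
      using pbar_mono_Gamma[of x y I q \<sigma> k "Tstat I q z"] by (auto simp: CS_Gamma_def)
  qed
  moreover have "Gamma_hat I q \<sigma> \<alpha> k z = Inf ?S"
    by (simp add: Gamma_hat_def CS_Gamma_def)
  moreover have "1 \<le> x" if "x \<in> ?S" for x
    using that by (simp add: CS_Gamma_def)
  ultimately show ?thesis
    by auto
qed

lemma CS_I_coverage:
  assumes p: "\<forall>i<I. 0 \<le> p i \<and> p i \<le> 1"
    and \<sigma>_bij: "bij_betw \<sigma> {..<I} {..<I}"
    and \<sigma>_order: "\<forall>a b. a \<le> b \<and> b < I \<longrightarrow>
                    \<bar>q (\<sigma> a) True - q (\<sigma> a) False\<bar> \<le> \<bar>q (\<sigma> b) True - q (\<sigma> b) False\<bar>"
    and "1 \<le> \<Gamma>0" "0 \<le> \<alpha>"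
  shows "1 - \<alpha> \<le> measure_pmf.prob (Zdist I p) {z. Istar I p \<Gamma>0 \<in> CS_I I q \<sigma> \<alpha> \<Gamma>0 z}"
proof -
  define B where "B = {i \<in> {..<I}. Gamma_star p i \<le> \<Gamma>0}"
  have "B \<subseteq> {..<I}"
    by (auto simp: B_def)
  then have "card B \<le> I"
    using card_mono[OF finite_lessThan] by fastforce
  have "Istar I p \<Gamma>0 = card ({..<I} - B)"
    unfolding Istar_def B_def by (intro arg_cong[where f = card]) (auto simp: not_le)
  with \<open>B \<subseteq> {..<I}\<close> have Istar: "Istar I p \<Gamma>0 = I - card B"
    by (simp add: card_Diff_subset finite_subset)
  have "1 - \<alpha> \<le> measure_pmf.prob (Zdist I p) {z. \<alpha> < pbar I q \<sigma> \<Gamma>0 (card B) (Tstat I q z)}"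
    by (rule pbar_coverage[OF p \<sigma>_bij \<sigma>_order \<open>1 \<le> \<Gamma>0\<close> \<open>B \<subseteq> {..<I}\<close> refl])
       (use assms(5) in \<open>auto simp: B_def\<close>)
  also have "\<dots> \<le> measure_pmf.prob (Zdist I p) {z. Istar I p \<Gamma>0 \<in> CS_I I q \<sigma> \<alpha> \<Gamma>0 z}"
    using Istar \<open>card B \<le> I\<close> by (intro measure_pmf.finite_measure_mono) (auto simp: CS_I_def)
  finally show ?thesis .
qed

lemma CS_I_eq_atLeastAtMost:
  assumes "1 \<le> \<Gamma>0" "\<alpha> < 1"
  shows "CS_I I q \<sigma> \<alpha> \<Gamma>0 z = {I_hat I q \<sigma> \<alpha> \<Gamma>0 z..I}"
  unfolding CS_I_def I_hat_def
proof (rule image_diff_downward_closed)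
  fix k k' assume "k \<le> k'" "\<alpha> < pbar I q \<sigma> \<Gamma>0 k' (Tstat I q z)"
  then show "\<alpha> < pbar I q \<sigma> \<Gamma>0 k (Tstat I q z)"
    using pbar_antimono_k[OF assms(1) \<open>k \<le> k'\<close>] by (meson less_le_trans)
qed (use assms(2) in \<open>simp add: pbar_def\<close>)

theorem corollary3:
  fixes I :: nat
    and p :: "nat \<Rightarrow> real"
    and Y1 Y0 :: "nat \<Rightarrow> bool \<Rightarrow> real"
    and Q :: "(nat \<Rightarrow> bool \<Rightarrow> real) \<Rightarrow> nat \<Rightarrow> bool \<Rightarrow> real"
    and q :: "nat \<Rightarrow> bool \<Rightarrow> real"
    and \<sigma> :: "nat \<Rightarrow> nat"
    and \<alpha> :: real
  assumes p_range: "\<forall>i<I. 0 \<le> p i \<and> p i \<le> 1"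
    and fisher_null: "\<forall>i<I. \<forall>j. Y1 i j = Y0 i j"
    and q_def: "q = Q Y0"
    and \<sigma>_bij: "bij_betw \<sigma> {..<I} {..<I}"
    and \<sigma>_order: "\<forall>a b. a \<le> b \<and> b < I \<longrightarrow>
                    \<bar>q (\<sigma> a) True - q (\<sigma> a) False\<bar> \<le> \<bar>q (\<sigma> b) True - q (\<sigma> b) False\<bar>"
    and \<alpha>_range: "0 < \<alpha>" "\<alpha> < 1"
  shows
    "(\<forall>k. 1 \<le> k \<and> k \<le> I \<longrightarrow>
        measure_pmf.prob (Zdist I p) {z. Gamma_order I p k \<in> CS_Gamma I q \<sigma> \<alpha> k z} \<ge> 1 - \<alpha>
      \<and> (\<forall>z. CS_Gamma I q \<sigma> \<alpha> k z = {\<Gamma>0. 1 \<le> \<Gamma>0 \<and> Gamma_hat I q \<sigma> \<alpha> k z < \<Gamma>0}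
            \<or> CS_Gamma I q \<sigma> \<alpha> k z = {\<Gamma>0. 1 \<le> \<Gamma>0 \<and> Gamma_hat I q \<sigma> \<alpha> k z \<le> \<Gamma>0}))
   \<and> (\<forall>\<Gamma>0. 1 \<le> \<Gamma>0 \<longrightarrow>
        measure_pmf.prob (Zdist I p) {z. Istar I p \<Gamma>0 \<in> CS_I I q \<sigma> \<alpha> \<Gamma>0 z} \<ge> 1 - \<alpha>
      \<and> (\<forall>z. CS_I I q \<sigma> \<alpha> \<Gamma>0 z = {I_hat I q \<sigma> \<alpha> \<Gamma>0 z..I}))"
  \<comment> \<open>Fisher's null is built into Tstat, which reads the outcome off the fixed q.\<close>
proof (intro conjI allI impI)
  fix k assume "1 \<le> k \<and> k \<le> I"
  then show "measure_pmf.prob (Zdist I p) {z. Gamma_order I p k \<in> CS_Gamma I q \<sigma> \<alpha> k z} \<ge> 1 - \<alpha>"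
    using CS_Gamma_coverage[OF p_range \<sigma>_bij \<sigma>_order] \<alpha>_range by simp
next
  fix k z
  show "CS_Gamma I q \<sigma> \<alpha> k z = {\<Gamma>0. 1 \<le> \<Gamma>0 \<and> Gamma_hat I q \<sigma> \<alpha> k z < \<Gamma>0}
        \<or> CS_Gamma I q \<sigma> \<alpha> k z = {\<Gamma>0. 1 \<le> \<Gamma>0 \<and> Gamma_hat I q \<sigma> \<alpha> k z \<le> \<Gamma>0}"
    by (rule CS_Gamma_cases)
next
  fix \<Gamma>0 :: ereal assume "1 \<le> \<Gamma>0"
  then show "measure_pmf.prob (Zdist I p) {z. Istar I p \<Gamma>0 \<in> CS_I I q \<sigma> \<alpha> \<Gamma>0 z} \<ge> 1 - \<alpha>"
    using CS_I_coverage[OF p_range \<sigma>_bij \<sigma>_order] \<alpha>_range by simp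
next
  fix \<Gamma>0 :: ereal and z assume "1 \<le> \<Gamma>0"
  then show "CS_I I q \<sigma> \<alpha> \<Gamma>0 z = {I_hat I q \<sigma> \<alpha> \<Gamma>0 z..I}"
    using CS_I_eq_atLeastAtMost \<alpha>_range by blast
qed

end
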